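(* Let $R$ be a finite Blaschke product and $m\ge1$. Then there exists an isomorphism of Hilbert bimodules over $A=C(\mathbb{T})$, $\Psi:X_R^{\otimes m}\to X_{R^{\circ m}}$, such that $\Psi(\xi_1\otimes\cdots\otimes\xi_m)=\xi_1\,(\xi_2\circ R)\,(\xi_3\circ R^{\circ2})\cdots(\xi_m\circ R^{\circ(m-1)})$ for $\xi_1,\dots,\xi_m\in X_R$.
   Context: A finite Blaschke product is $R(z)=\lambda\prod_{k=1}^n\frac{z-z_k}{1-\overline{z_k}z}$ with $\lambda\in\mathbb{T}$ and $z_k$ in the open unit disk; its iterates are again finite Blaschke products. For a finite Blaschke product $Q$, $X_Q=C(\mathbb{T})$ is the Hilbert bimodule over $A=C(\mathbb{T})$ with $(a\cdot\xi\cdot b)(z)=a(z)\xi(z)b(Q(z))$ and $\langle\xi,\eta\rangle_A(w)=\sum_{z\in Q^{-1}(w)}\frac{1}{|Q'(z)|}\overline{\xi(z)}\eta(z)$. $X_R^{\otimes m}$ denotes the $m$-fold interior tensor product of $X_R$ over $A$ (balanced over the right/left actions). *)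

theory Defs
  imports "HOL-Analysis.Analysis"
begin

text \<open>Elements of A = C(T) and of the bimodules X_Q are represented by functions
  complex => complex that are continuous on the unit circle and vanish off it
  (canonical representatives, so HOL equality is equality in C(T)).\<close>

type_synonym cfun = "complex \<Rightarrow> complex"

definition torus :: "complex set" where
  "torus = sphere 0 1"

definition CT :: "cfun set" where
  "CT = {f. continuous_on torus f \<and> (\<forall>z. z \<notin> torus \<longrightarrow> f z = 0)}"

definition fin_blaschke :: "cfun \<Rightarrow> bool" where
  "fin_blaschke R \<longleftrightarrow> (\<exists>lam zs. zs \<noteq> [] \<and> norm lam = 1 \<and> (\<forall>a\<in>set zs. norm a < 1) \<and>
      R = (\<lambda>z. lam * (\<Prod>a\<leftarrow>zs. (z - a) / (1 - cnj a * z))))"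

definition lact :: "cfun \<Rightarrow> cfun \<Rightarrow> cfun" where
  "lact a \<xi> = (\<lambda>z. a z * \<xi> z)"

definition ract :: "cfun \<Rightarrow> cfun \<Rightarrow> cfun \<Rightarrow> cfun" where
  "ract Q \<xi> b = (\<lambda>z. \<xi> z * b (Q z))"

definition bm_inner :: "cfun \<Rightarrow> cfun \<Rightarrow> cfun \<Rightarrow> cfun" where
  "bm_inner Q \<xi> \<eta> = (\<lambda>w. if w \<in> torus then
       (\<Sum>z\<in>{z\<in>torus. Q z = w}. cnj (\<xi> z) * \<eta> z / complex_of_real (norm (deriv Q z)))
     else 0)"

text \<open>Interior tensor power X_R^{(m)}: elementary tensors x 0 (x) ... (x) x (m-1)
  are functions nat => cfun (only indices < m matter); the algebraic tensor product
  consists of finite formal sums (lists) of elementary tensors.\<close>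

type_synonym etensor = "nat \<Rightarrow> cfun"

fun tin :: "cfun \<Rightarrow> nat \<Rightarrow> etensor \<Rightarrow> etensor \<Rightarrow> cfun" where
  "tin R 0 x y = bm_inner R (x 0) (y 0)"
| "tin R (Suc k) x y = bm_inner R (x (Suc k)) (lact (tin R k x y) (y (Suc k)))"

definition tsums :: "nat \<Rightarrow> etensor list set" where
  "tsums m = {xs. \<forall>x\<in>set xs. \<forall>i<m. x i \<in> CT}"

definition sinner :: "cfun \<Rightarrow> nat \<Rightarrow> etensor list \<Rightarrow> etensor list \<Rightarrow> cfun" where
  "sinner R m xs ys = (\<lambda>w. \<Sum>x\<leftarrow>xs. \<Sum>y\<leftarrow>ys. tin R (m - 1) x y w)"

definition tscale :: "complex \<Rightarrow> etensor list \<Rightarrow> etensor list" where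
  "tscale c xs = map (\<lambda>x. x(0 := (\<lambda>z. c * x 0 z))) xs"

definition tdiff :: "etensor list \<Rightarrow> etensor list \<Rightarrow> etensor list" where
  "tdiff xs ys = xs @ tscale (-1) ys"

definition tlact :: "cfun \<Rightarrow> etensor list \<Rightarrow> etensor list" where
  "tlact a xs = map (\<lambda>x. x(0 := lact a (x 0))) xs"

definition tract :: "cfun \<Rightarrow> nat \<Rightarrow> etensor list \<Rightarrow> cfun \<Rightarrow> etensor list" where
  "tract R m xs b = map (\<lambda>x. x(m - 1 := ract R (x (m - 1)) b)) xs"

text \<open>Completion w.r.t. the norm ||x|| = ||<x,x>||_sup^(1/2): Cauchy sequences of formal
  sums modulo null sequences. (Quotienting the algebraic tensor product over C by the null
  space of the semi-inner product automatically enforces the A-balancing relations.)\<close>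

definition tsmall :: "cfun \<Rightarrow> nat \<Rightarrow> etensor list \<Rightarrow> real \<Rightarrow> bool" where
  "tsmall R m xs e \<longleftrightarrow> (\<forall>w\<in>torus. norm (sinner R m xs xs w) \<le> e)"

definition tcauchy :: "cfun \<Rightarrow> nat \<Rightarrow> (nat \<Rightarrow> etensor list) \<Rightarrow> bool" where
  "tcauchy R m s \<longleftrightarrow> (\<forall>n. s n \<in> tsums m) \<and>
     (\<forall>e>0. \<exists>N. \<forall>n\<ge>N. \<forall>k\<ge>N. tsmall R m (tdiff (s n) (s k)) e)"

definition tequiv :: "cfun \<Rightarrow> nat \<Rightarrow> (nat \<Rightarrow> etensor list) \<Rightarrow> (nat \<Rightarrow> etensor list) \<Rightarrow> bool" where
  "tequiv R m s t \<longleftrightarrow> (\<forall>e>0. \<exists>N. \<forall>n\<ge>N. tsmall R m (tdiff (s n) (t n)) e)"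

definition hbm_iso :: "cfun \<Rightarrow> nat \<Rightarrow> cfun \<Rightarrow> ((nat \<Rightarrow> etensor list) \<Rightarrow> cfun) \<Rightarrow> bool" where
  "hbm_iso R m Q \<Psi> \<longleftrightarrow>
     (\<forall>s. tcauchy R m s \<longrightarrow> \<Psi> s \<in> CT) \<and>
     (\<forall>s t. tcauchy R m s \<longrightarrow> tcauchy R m t \<longrightarrow> (\<Psi> s = \<Psi> t \<longleftrightarrow> tequiv R m s t)) \<and>
     (\<forall>f\<in>CT. \<exists>s. tcauchy R m s \<and> \<Psi> s = f) \<and>
     (\<forall>s t. tcauchy R m s \<longrightarrow> tcauchy R m t \<longrightarrow> \<Psi> (\<lambda>n. s n @ t n) = (\<lambda>z. \<Psi> s z + \<Psi> t z)) \<and>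
     (\<forall>s c. tcauchy R m s \<longrightarrow> \<Psi> (\<lambda>n. tscale c (s n)) = (\<lambda>z. c * \<Psi> s z)) \<and>
     (\<forall>s t. tcauchy R m s \<longrightarrow> tcauchy R m t \<longrightarrow>
        (\<forall>e>0. \<exists>N. \<forall>n\<ge>N. \<forall>w\<in>torus.
           norm (sinner R m (s n) (t n) w - bm_inner Q (\<Psi> s) (\<Psi> t) w) \<le> e)) \<and>
     (\<forall>s a. tcauchy R m s \<longrightarrow> a \<in> CT \<longrightarrow> \<Psi> (\<lambda>n. tlact a (s n)) = lact a (\<Psi> s)) \<and>
     (\<forall>s b. tcauchy R m s \<longrightarrow> b \<in> CT \<longrightarrow> \<Psi> (\<lambda>n. tract R m (s n) b) = ract Q (\<Psi> s) b)"

end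

theory Submission
  imports Defs "HOL-Computational_Algebra.Polynomial" "HOL-Complex_Analysis.Cauchy_Integral_Formula"
begin

text \<open>Of \<open>R\<close> only
  this is used: it maps the circle to itself, \<open>|R'|\<close> is bounded away from \<open>0\<close> and \<open>\<infinity>\<close> there,
  and its fibres on the circle are finite of uniformly bounded size (for a Blaschke product
  \<open>z R'/R\<close> is a sum of Poisson kernels, and the fibres are zero sets of polynomials). These
  properties pass to compositions, and for such maps the inner product of \<open>X\<^sub>Q \<otimes> X\<^sub>R\<close>
  agrees with that of \<open>X\<^bsub>R \<circ> Q\<^esub>\<close> on products, so the map preserves inner products of
  formal sums. The same bounds make the Hilbert module norm equivalent to the sup norm on the
  circle, so Cauchy sequences of formal sums become uniformly Cauchy sequences of continuous
  functions, and their uniform limits give the extension to the completion, isometric and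
  onto.\<close>

definition blaschke_factor :: "complex \<Rightarrow> complex \<Rightarrow> complex" where
  "blaschke_factor a z = (z - a) / (1 - cnj a * z)"

definition blaschke_prod :: "complex list \<Rightarrow> complex \<Rightarrow> complex" where
  "blaschke_prod zs z = (\<Prod>a\<leftarrow>zs. blaschke_factor a z)"

lemma fin_blaschke_iff:
  "fin_blaschke R \<longleftrightarrow> (\<exists>lam zs. zs \<noteq> [] \<and> norm lam = 1 \<and> (\<forall>a\<in>set zs. norm a < 1) \<and>
      R = (\<lambda>z. lam * blaschke_prod zs z))"
  by (simp add: fin_blaschke_def blaschke_prod_def blaschke_factor_def)

lemma blaschke_prod_Nil [simp]: "blaschke_prod [] z = 1"
  by (simp add: blaschke_prod_def)

lemma blaschke_prod_Cons [simp]: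
  "blaschke_prod (a # zs) z = blaschke_factor a z * blaschke_prod zs z"
  by (simp add: blaschke_prod_def)

lemma torus_iff: "z \<in> torus \<longleftrightarrow> norm z = 1"
  by (simp add: torus_def)

lemma one_in_torus: "1 \<in> torus"
  by (simp add: torus_iff)

lemma cnj_mult_neq_one:
  assumes "norm a < 1" "norm z \<le> 1"
  shows "cnj a * z \<noteq> 1"
proof -
  have "norm (cnj a * z) \<le> norm a"
    using assms by (simp add: norm_mult mult_left_le)
  then show ?thesis using assms(1) by auto
qed

lemma circle_denominator:
  assumes "norm z = 1"
  shows "1 - cnj a * z = z * cnj (z - a)"
proof -
  have "z * cnj z = 1"
    using assms by (metis complex_norm_square of_real_1 power_one)
  then show ?thesis by (simp add: algebra_simps)
qed

lemma norm_blaschke_factor: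
  assumes "norm z = 1" "norm a < 1"
  shows "norm (blaschke_factor a z) = 1"
  using assms by (auto simp: blaschke_factor_def circle_denominator norm_divide norm_mult
      simp del: complex_cnj_diff)

lemma norm_blaschke_prod:
  assumes "norm z = 1" "\<forall>a\<in>set zs. norm a < 1"
  shows "norm (blaschke_prod zs z) = 1"
  using assms(2) by (induction zs) (simp_all add: norm_mult norm_blaschke_factor[OF assms(1)])

lemma blaschke_factor_has_derivative:
  assumes "cnj a * z \<noteq> 1"
  shows "(blaschke_factor a has_field_derivative (1 - cnj a * a) / (1 - cnj a * z)^2) (at z)"
  unfolding blaschke_factor_def [abs_def] using assms
  by (auto intro!: derivative_eq_intros simp: field_simps power2_eq_square)

text \<open>On the circle the logarithmic derivative \<open>z B'(z) / B(z)\<close> of a Blaschke factor is the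
  Poisson kernel \<open>(1 - |a|\<^sup>2) / |z - a|\<^sup>2 > 0\<close>.\<close>

lemma blaschke_factor_log_deriv:
  assumes "norm z = 1" "norm a < 1"
  shows "z * ((1 - cnj a * a) / (1 - cnj a * z)^2) =
    of_real ((1 - norm a ^ 2) / norm (z - a) ^ 2) * blaschke_factor a z"
proof -
  define c where "c = 1 - cnj a * z"
  define k where "k = complex_of_real (norm (z - a) ^ 2)"
  have k: "k \<noteq> 0" unfolding k_def using assms by auto
  have c: "c \<noteq> 0" unfolding c_def using cnj_mult_neq_one[of a z] assms by simp
  have key: "(z - a) * c = z * k"
    unfolding c_def k_def circle_denominator[OF assms(1)] complex_norm_square
    by (simp add: algebra_simps)
  have "1 - cnj a * a = of_real (1 - norm a ^ 2)"
    using complex_norm_square[of a] by (simp add: mult.commute)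
  then have "of_real ((1 - norm a ^ 2) / norm (z - a) ^ 2) * blaschke_factor a z =
      (1 - cnj a * a) * ((z - a) * c) / (k * c^2)"
    unfolding blaschke_factor_def c_def[symmetric] k_def using c
    by (simp add: power2_eq_square)
  also have "\<dots> = z * ((1 - cnj a * a) / c^2)"
    unfolding key using k c by (simp add: field_simps)
  finally show ?thesis unfolding c_def by simp
qed

lemma blaschke_prod_log_deriv:
  assumes "norm z = 1" "\<forall>a\<in>set zs. norm a < 1"
  shows "\<exists>D r. (blaschke_prod zs has_field_derivative D) (at z) \<and>
    z * D = of_real r * blaschke_prod zs z \<and> r \<ge> 0 \<and> (zs \<noteq> [] \<longrightarrow> r > 0)"
  using assms(2)
proof (induction zs)
  case Nil
  have "(blaschke_prod [] has_field_derivative 0) (at z)"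
    using DERIV_const[of 1 "at z"] by (simp add: blaschke_prod_def [abs_def])
  then show ?case by (intro exI[of _ 0]) auto
next
  case (Cons a zs)
  then obtain D r where D: "(blaschke_prod zs has_field_derivative D) (at z)"
    "z * D = of_real r * blaschke_prod zs z" "r \<ge> 0" by auto
  have a: "norm a < 1" using Cons.prems by simp
  define b' where "b' = (1 - cnj a * a) / (1 - cnj a * z)^2"
  define s where "s = (1 - norm a ^ 2) / norm (z - a) ^ 2"
  have "norm a ^ 2 < 1" "z \<noteq> a" using a assms(1) by (auto simp: power_less_one_iff)
  then have s: "s > 0" unfolding s_def by simp
  have b': "(blaschke_factor a has_field_derivative b') (at z)"
    unfolding b'_def using cnj_mult_neq_one[of a z] a assms(1)
    by (intro blaschke_factor_has_derivative) simp
  have "blaschke_prod (a # zs) = (\<lambda>z. blaschke_factor a z * blaschke_prod zs z)"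
    by auto
  then have "(blaschke_prod (a # zs) has_field_derivative
      b' * blaschke_prod zs z + blaschke_factor a z * D) (at z)"
    using DERIV_mult[OF b' D(1)] by (simp add: mult.commute)
  moreover have "z * (b' * blaschke_prod zs z + blaschke_factor a z * D) =
      of_real (s + r) * blaschke_prod (a # zs) z"
  proof -
    have "z * (b' * blaschke_prod zs z + blaschke_factor a z * D) =
        (z * b') * blaschke_prod zs z + blaschke_factor a z * (z * D)"
      by (simp add: algebra_simps)
    then show ?thesis
      unfolding D(2) blaschke_factor_log_deriv[OF assms(1) a, folded b'_def s_def]
      by (simp add: algebra_simps)
  qed
  moreover have "s + r > 0" using s D(3) by simp
  ultimately show ?case by (metis less_imp_le)
qed

lemma blaschke_prod_holomorphic:
  "blaschke_prod zs holomorphic_on {z. \<forall>a\<in>set zs. cnj a * z \<noteq> 1}"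
proof (induction zs)
  case Nil
  then show ?case by (simp add: blaschke_prod_def [abs_def])
next
  case (Cons a zs)
  have "blaschke_prod zs holomorphic_on {z. \<forall>a\<in>set (a # zs). cnj a * z \<noteq> 1}"
    by (rule holomorphic_on_subset[OF Cons]) auto
  moreover have "blaschke_factor a holomorphic_on {z. \<forall>a\<in>set (a # zs). cnj a * z \<noteq> 1}"
    unfolding blaschke_factor_def [abs_def] by (intro holomorphic_intros) auto
  ultimately show ?case
    by (simp add: holomorphic_on_mult blaschke_prod_def [abs_def])
qed

lemma open_blaschke_domain: "open {z::complex. \<forall>a\<in>set zs. cnj a * z \<noteq> 1}"
proof -
  have "{z::complex. \<forall>a\<in>set zs. cnj a * z \<noteq> 1} = (\<Inter>a\<in>set zs. {z. cnj a * z \<noteq> 1})"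
    by auto
  then show ?thesis by (auto intro!: open_INT open_Collect_neq continuous_intros)
qed

lemma deriv_bounds_on_torus:
  assumes "f holomorphic_on S" "open S" "torus \<subseteq> S" "\<And>z. z \<in> torus \<Longrightarrow> deriv f z \<noteq> 0"
  shows "\<exists>d B. 0 < d \<and> (\<forall>z\<in>torus. d \<le> norm (deriv f z) \<and> norm (deriv f z) \<le> B)"
proof -
  have cont: "continuous_on torus (\<lambda>z. norm (deriv f z))"
    using assms(1-3) by (intro continuous_intros holomorphic_on_imp_continuous_on
        holomorphic_on_subset[OF holomorphic_deriv])
  have torus: "compact torus" "torus \<noteq> {}"
    using one_in_torus by (auto simp: torus_def)
  obtain z0 where "z0 \<in> torus" "\<forall>y\<in>torus. norm (deriv f z0) \<le> norm (deriv f y)"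
    using continuous_attains_inf[OF torus cont] by blast
  moreover obtain z1 where "\<forall>y\<in>torus. norm (deriv f y) \<le> norm (deriv f z1)"
    using continuous_attains_sup[OF torus cont] by blast
  ultimately show ?thesis
    using assms(4) by (intro exI[of _ "norm (deriv f z0)"] exI[of _ "norm (deriv f z1)"]) auto
qed

lemma degree_prod_list_linear: "degree (\<Prod>a\<leftarrow>zs. [:c a, d a:]) \<le> length zs"
proof -
  have "degree (\<Prod>a\<leftarrow>zs. [:c a, d a:]) \<le> (\<Sum>a\<leftarrow>zs. degree [:c a, d a:])"
    using degree_prod_list_le[of "map (\<lambda>a. [:c a, d a:]) zs"] by (simp add: comp_def)
  also have "\<dots> \<le> (\<Sum>a\<leftarrow>zs. 1)"
    by (intro sum_list_mono) simp
  finally show ?thesis by (simp add: sum_list_triv)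
qed

text \<open>Clearing denominators, the fibre of \<open>lam B\<close> over \<open>w \<noteq> 0\<close> lies in the zero set of
  \<open>lam \<Prod>(z - a) - w \<Prod>(1 - cnj a z)\<close>, a polynomial that is nonzero because it does not vanish
  at the zeros of \<open>B\<close>.\<close>

lemma blaschke_fibre_poly:
  assumes zs: "zs \<noteq> []" "\<forall>a\<in>set zs. norm a < 1" and w: "w \<noteq> 0"
  obtains p where "p \<noteq> 0" "degree p \<le> length zs"
    "{z\<in>torus. lam * blaschke_prod zs z = w} \<subseteq> {z. poly p z = 0}"
proof -
  define p where "p = smult lam (\<Prod>a\<leftarrow>zs. [:-a, 1:]) - smult w (\<Prod>a\<leftarrow>zs. [:1, -cnj a:])"
  have poly_p: "poly p z = lam * (\<Prod>a\<leftarrow>zs. z - a) - w * (\<Prod>a\<leftarrow>zs. 1 - cnj a * z)" for z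
  proof -
    have "poly (\<Prod>a\<leftarrow>zs. q a) z = (\<Prod>a\<leftarrow>zs. poly (q a) z)" for q
      by (induction zs) auto
    then show ?thesis by (simp add: p_def algebra_simps)
  qed
  have denominators: "(\<Prod>a\<leftarrow>zs. 1 - cnj a * z) \<noteq> 0" if "norm z \<le> 1" for z
    using cnj_mult_neq_one zs(2) that by (auto simp: prod_list_zero_iff)
  obtain a1 where a1: "a1 \<in> set zs" using zs(1) by (cases zs) auto
  have "(\<Prod>a\<leftarrow>zs. a1 - a) = 0"
    using a1 by (auto simp: prod_list_zero_iff)
  moreover have "norm a1 \<le> 1" using a1 zs(2) by (simp add: less_imp_le)
  ultimately have "poly p a1 \<noteq> 0"
    using w denominators[of a1] by (simp add: poly_p)
  then have "p \<noteq> 0" by auto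
  moreover have "degree p \<le> length zs"
    unfolding p_def using degree_prod_list_linear[of "\<lambda>a. - a" "\<lambda>_. 1" zs]
      degree_prod_list_linear[of "\<lambda>_. 1" "\<lambda>a. - cnj a" zs]
    by (intro order.trans[OF degree_diff_le_max]) (auto intro: order.trans[OF degree_smult_le])
  moreover have "poly p z = 0" if z: "z \<in> torus" and fibre: "lam * blaschke_prod zs z = w" for z
  proof -
    have "blaschke_prod zs z * (\<Prod>a\<leftarrow>zs. 1 - cnj a * z) = (\<Prod>a\<leftarrow>zs. z - a)"
      using zs(2) cnj_mult_neq_one[of _ z] z
      by (induction zs) (auto simp: blaschke_factor_def torus_iff field_simps)
    then show ?thesis unfolding poly_p fibre[symmetric] by (simp add: algebra_simps)
  qed
  ultimately show ?thesis using that by blast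
qed

definition circle_fibre :: "cfun \<Rightarrow> complex \<Rightarrow> complex set" where
  "circle_fibre Q w = {z\<in>torus. Q z = w}"

text \<open>The properties of a finite Blaschke product on the circle that the bimodule computations
  use; unlike the Blaschke form itself, they are visibly stable under composition.\<close>

definition circle_cover :: "cfun \<Rightarrow> bool" where
  "circle_cover Q \<longleftrightarrow> Q ` torus \<subseteq> torus \<and> (\<forall>z\<in>torus. Q field_differentiable at z) \<and>
     (\<exists>d B. 0 < d \<and> (\<forall>z\<in>torus. d \<le> norm (deriv Q z) \<and> norm (deriv Q z) \<le> B)) \<and>
     (\<exists>N. \<forall>w. finite (circle_fibre Q w) \<and> card (circle_fibre Q w) \<le> N)"

lemma blaschke_prod_deriv_nonzero:
  assumes "norm z = 1" "zs \<noteq> []" "\<forall>a\<in>set zs. norm a < 1"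
  obtains D where "(blaschke_prod zs has_field_derivative D) (at z)" "D \<noteq> 0"
proof -
  obtain D r where D: "(blaschke_prod zs has_field_derivative D) (at z)"
    "z * D = of_real r * blaschke_prod zs z" "r > 0"
    using blaschke_prod_log_deriv[OF assms(1,3)] assms(2) by blast
  moreover have "D \<noteq> 0"
    using D(2,3) norm_blaschke_prod[OF assms(1,3)] by auto
  ultimately show ?thesis using that by blast
qed

lemma blaschke_fibre_card:
  assumes zs: "zs \<noteq> []" "\<forall>a\<in>set zs. norm a < 1" and lam: "norm lam = 1"
  shows "finite (circle_fibre (\<lambda>z. lam * blaschke_prod zs z) w) \<and>
    card (circle_fibre (\<lambda>z. lam * blaschke_prod zs z) w) \<le> length zs"
proof (cases "w = 0")
  case True
  then have "circle_fibre (\<lambda>z. lam * blaschke_prod zs z) w = {}"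
    using lam norm_blaschke_prod[of _ zs] zs(2) by (force simp: circle_fibre_def torus_iff)
  then show ?thesis by simp
next
  case False
  then obtain p where p: "p \<noteq> 0" "degree p \<le> length zs"
    "circle_fibre (\<lambda>z. lam * blaschke_prod zs z) w \<subseteq> {z. poly p z = 0}"
    using blaschke_fibre_poly[OF zs] unfolding circle_fibre_def by metis
  have "card (circle_fibre (\<lambda>z. lam * blaschke_prod zs z) w) \<le> card {z. poly p z = 0}"
    using p(1,3) poly_roots_finite by (intro card_mono)
  also have "\<dots> \<le> length zs"
    using card_poly_roots_bound[OF p(1)] p(2) by simp
  finally show ?thesis using p(1,3) poly_roots_finite finite_subset by blast
qed

lemma blaschke_circle_cover:
  assumes "fin_blaschke R"
  shows "circle_cover R"
proof -
  obtain lam zs where zs: "zs \<noteq> []" "norm lam = 1" "\<forall>a\<in>set zs. norm a < 1"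
    and R: "R = (\<lambda>z. lam * blaschke_prod zs z)"
    using assms unfolding fin_blaschke_iff by blast
  have deriv_R: "\<exists>D. (R has_field_derivative D) (at z) \<and> D \<noteq> 0" if "z \<in> torus" for z
    using blaschke_prod_deriv_nonzero[of z zs] zs that unfolding R torus_iff
    by (metis DERIV_cmult mult_eq_0_iff norm_zero zero_neq_one)
  define S where "S = {z::complex. \<forall>a\<in>set zs. cnj a * z \<noteq> 1}"
  have "torus \<subseteq> S"
    using zs(3) cnj_mult_neq_one by (force simp: S_def torus_iff)
  moreover have "R holomorphic_on S"
    unfolding R S_def by (intro holomorphic_intros blaschke_prod_holomorphic)
  ultimately have "\<exists>d B. 0 < d \<and> (\<forall>z\<in>torus. d \<le> norm (deriv R z) \<and> norm (deriv R z) \<le> B)"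
    using deriv_R open_blaschke_domain[of zs]
    by (intro deriv_bounds_on_torus[of R S]) (auto simp: S_def dest: DERIV_imp_deriv)
  moreover have "R ` torus \<subseteq> torus"
    using norm_blaschke_prod[of _ zs] zs by (auto simp: R torus_iff norm_mult)
  moreover have "\<forall>z\<in>torus. R field_differentiable at z"
    using deriv_R field_differentiable_def by blast
  ultimately show ?thesis
    unfolding circle_cover_def R using blaschke_fibre_card[OF zs(1,3,2)] by blast
qed

lemma circle_cover_torus: "circle_cover Q \<Longrightarrow> z \<in> torus \<Longrightarrow> Q z \<in> torus"
  by (auto simp: circle_cover_def)

lemma circle_cover_differentiable:
  "circle_cover Q \<Longrightarrow> z \<in> torus \<Longrightarrow> Q field_differentiable at z"
  by (simp add: circle_cover_def)

lemma circle_cover_continuous_on: "circle_cover Q \<Longrightarrow> continuous_on torus Q"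
  by (meson continuous_at_imp_continuous_on field_differentiable_imp_continuous_at
      circle_cover_differentiable)

lemma circle_cover_deriv_bounds:
  assumes "circle_cover Q"
  obtains d B where "0 < d" "\<And>z. z \<in> torus \<Longrightarrow> d \<le> norm (deriv Q z) \<and> norm (deriv Q z) \<le> B"
  using assms unfolding circle_cover_def by blast

lemma circle_cover_fibre_bound:
  assumes "circle_cover Q"
  obtains N where "\<And>w. finite (circle_fibre Q w)" "\<And>w. card (circle_fibre Q w) \<le> N"
  using assms unfolding circle_cover_def by blast

lemma circle_cover_id: "circle_cover id"
proof -
  have "circle_fibre id w \<subseteq> {w}" for w
    by (auto simp: circle_fibre_def)
  then have "finite (circle_fibre id w) \<and> card (circle_fibre id w) \<le> 1" for w
    using finite_subset card_mono[of "{w}"] by fastforce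
  then show ?thesis
    unfolding circle_cover_def by (auto intro!: exI[of _ 1] field_differentiable_ident)
qed

lemma deriv_circle_cover_comp:
  "circle_cover R \<Longrightarrow> circle_cover Q \<Longrightarrow> z \<in> torus \<Longrightarrow>
    deriv (R \<circ> Q) z = deriv R (Q z) * deriv Q z"
  by (simp add: circle_cover_torus circle_cover_differentiable deriv_chain)

lemma circle_fibre_comp:
  "circle_cover Q \<Longrightarrow> circle_fibre (R \<circ> Q) w = (\<Union>z\<in>circle_fibre R w. circle_fibre Q z)"
  by (auto simp: circle_fibre_def circle_cover_torus)

lemma circle_cover_comp:
  assumes R: "circle_cover R" and Q: "circle_cover Q"
  shows "circle_cover (R \<circ> Q)"
proof -
  obtain d1 B1 where d1: "0 < d1" "\<And>z. z \<in> torus \<Longrightarrow> d1 \<le> norm (deriv R z) \<and> norm (deriv R z) \<le> B1"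
    using circle_cover_deriv_bounds[OF R] by metis
  obtain d2 B2 where d2: "0 < d2" "\<And>z. z \<in> torus \<Longrightarrow> d2 \<le> norm (deriv Q z) \<and> norm (deriv Q z) \<le> B2"
    using circle_cover_deriv_bounds[OF Q] by metis
  have bounds: "d1 * d2 \<le> norm (deriv (R \<circ> Q) z) \<and> norm (deriv (R \<circ> Q) z) \<le> B1 * B2"
    if z: "z \<in> torus" for z
    using d1(2)[OF circle_cover_torus[OF Q z]] d2(2)[OF z] d1(1) d2(1)
    unfolding deriv_circle_cover_comp[OF R Q z] norm_mult
    by (auto intro!: mult_mono)
  obtain N1 where N1: "\<And>w. finite (circle_fibre R w)" "\<And>w. card (circle_fibre R w) \<le> N1"
    using circle_cover_fibre_bound[OF R] by metis
  obtain N2 where N2: "\<And>w. finite (circle_fibre Q w)" "\<And>w. card (circle_fibre Q w) \<le> N2"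
    using circle_cover_fibre_bound[OF Q] by metis
  have fibres: "finite (circle_fibre (R \<circ> Q) w) \<and> card (circle_fibre (R \<circ> Q) w) \<le> N1 * N2"
    for w
  proof -
    have "card (circle_fibre (R \<circ> Q) w) \<le> (\<Sum>z\<in>circle_fibre R w. card (circle_fibre Q z))"
      unfolding circle_fibre_comp[OF Q] using N1(1) by (rule card_UN_le)
    also have "\<dots> \<le> card (circle_fibre R w) * N2"
      using sum_bounded_above[of "circle_fibre R w" "\<lambda>z. card (circle_fibre Q z)" N2] N2(2)
      by simp
    also have "\<dots> \<le> N1 * N2"
      using N1(2) by simp
    finally show ?thesis
      unfolding circle_fibre_comp[OF Q] using N1(1) N2(1) by simp
  qed
  have "\<forall>z\<in>torus. (R \<circ> Q) z \<in> torus \<and> (R \<circ> Q) field_differentiable at z"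
    using R Q by (simp add: circle_cover_torus circle_cover_differentiable field_differentiable_compose)
  then show ?thesis
    unfolding circle_cover_def using bounds fibres mult_pos_pos[OF d1(1) d2(1)] by blast
qed

lemma circle_cover_funpow: "circle_cover R \<Longrightarrow> circle_cover (R ^^ k)"
  by (induction k) (simp_all add: circle_cover_id circle_cover_comp)

lemma bm_inner_torus:
  "w \<in> torus \<Longrightarrow>
    bm_inner Q f g w = (\<Sum>z\<in>circle_fibre Q w. cnj (f z) * g z / of_real (norm (deriv Q z)))"
  by (simp add: bm_inner_def circle_fibre_def)

lemma bm_inner_outside_torus: "w \<notin> torus \<Longrightarrow> bm_inner Q f g w = 0"
  by (simp add: bm_inner_def)

lemma bm_inner_zero_left [simp]: "bm_inner Q (\<lambda>_. 0) g = (\<lambda>_. 0)"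
  by (simp add: bm_inner_def fun_eq_iff)

lemma bm_inner_add_left:
  "bm_inner Q (\<lambda>z. f z + f' z) g w = bm_inner Q f g w + bm_inner Q f' g w"
  by (simp add: bm_inner_def sum.distrib[symmetric] ring_distribs add_divide_distrib)

lemma bm_inner_add_right:
  "bm_inner Q f (\<lambda>z. g z + g' z) w = bm_inner Q f g w + bm_inner Q f g' w"
  by (simp add: bm_inner_def sum.distrib[symmetric] ring_distribs add_divide_distrib)

lemma bm_inner_sum_list_left:
  "bm_inner Q (\<lambda>z. \<Sum>x\<leftarrow>xs. f x z) g w = (\<Sum>x\<leftarrow>xs. bm_inner Q (f x) g w)"
  by (induction xs) (simp_all add: bm_inner_add_left)

lemma bm_inner_sum_list_right:
  "bm_inner Q f (\<lambda>z. \<Sum>x\<leftarrow>xs. g x z) w = (\<Sum>x\<leftarrow>xs. bm_inner Q f (g x) w)"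
  by (induction xs) (simp_all add: bm_inner_add_right, simp add: bm_inner_def)

lemma bm_inner_diff:
  "bm_inner Q f g w - bm_inner Q f' g' w =
    bm_inner Q (\<lambda>z. f z - f' z) g w + bm_inner Q f' (\<lambda>z. g z - g' z) w"
  by (simp add: bm_inner_def sum_subtractf[symmetric] sum.distrib[symmetric]
      diff_divide_distrib[symmetric] add_divide_distrib[symmetric] algebra_simps)

text \<open>The double sum over \<open>z \<in> R\<inverse>(w)\<close> and \<open>u \<in> Q\<inverse>(z)\<close> is the sum over
  \<open>(R \<circ> Q)\<inverse>(w)\<close>, and the weights multiply by the chain rule.\<close>

lemma bm_inner_comp:
  assumes R: "circle_cover R" and Q: "circle_cover Q"
  shows "bm_inner R g (lact (bm_inner Q f f') g') w =
    bm_inner (R \<circ> Q) (\<lambda>u. f u * g (Q u)) (\<lambda>u. f' u * g' (Q u)) w"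
proof (cases "w \<in> torus")
  case False
  then show ?thesis by (simp add: bm_inner_outside_torus)
next
  case w: True
  define h where "h u = cnj (f u * g (Q u)) * (f' u * g' (Q u)) /
      (of_real (norm (deriv R (Q u))) * of_real (norm (deriv Q u)))" for u
  have inner: "cnj (g z) * (bm_inner Q f f' z * g' z) / of_real (norm (deriv R z)) =
      (\<Sum>u\<in>circle_fibre Q z. h u)" if z: "z \<in> torus" for z
  proof -
    have "cnj (g z) * (bm_inner Q f f' z * g' z) / of_real (norm (deriv R z)) =
        (\<Sum>u\<in>circle_fibre Q z. cnj (g z) * (cnj (f u) * f' u / of_real (norm (deriv Q u)) * g' z)
          / of_real (norm (deriv R z)))"
      unfolding bm_inner_torus[OF z] by (simp add: sum_distrib_left sum_distrib_right sum_divide_distrib)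
    also have "\<dots> = (\<Sum>u\<in>circle_fibre Q z. h u)"
      by (intro sum.cong) (auto simp: h_def circle_fibre_def divide_inverse)
    finally show ?thesis .
  qed
  have fin: "finite (circle_fibre R w)" "\<And>z. finite (circle_fibre Q z)"
    using circle_cover_fibre_bound[OF R] circle_cover_fibre_bound[OF Q] by metis+
  have disj: "disjoint_family_on (circle_fibre Q) (circle_fibre R w)"
    by (auto simp: disjoint_family_on_def circle_fibre_def)
  have "bm_inner R g (lact (bm_inner Q f f') g') w = (\<Sum>z\<in>circle_fibre R w. \<Sum>u\<in>circle_fibre Q z. h u)"
    unfolding bm_inner_torus[OF w] lact_def by (intro sum.cong) (auto simp: inner circle_fibre_def)
  also have "\<dots> = (\<Sum>u\<in>circle_fibre (R \<circ> Q) w. h u)"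
    unfolding circle_fibre_comp[OF Q] using fin disj by (simp add: sum.UNION_disjoint_family)
  also have "\<dots> = bm_inner (R \<circ> Q) (\<lambda>u. f u * g (Q u)) (\<lambda>u. f' u * g' (Q u)) w"
    unfolding bm_inner_torus[OF w]
    by (intro sum.cong) (auto simp: h_def circle_fibre_def norm_mult deriv_circle_cover_comp[OF R Q])
  finally show ?thesis .
qed

lemma bm_inner_self:
  "w \<in> torus \<Longrightarrow>
    bm_inner Q f f w = of_real (\<Sum>u\<in>circle_fibre Q w. norm (f u) ^ 2 / norm (deriv Q u))"
  unfolding bm_inner_torus of_real_sum
  by (intro sum.cong) (simp_all only: of_real_divide complex_norm_square mult.commute)

lemma norm_sq_le_bm_inner:
  assumes Q: "circle_cover Q"
  obtains B where "B > 0" "\<And>f z. z \<in> torus \<Longrightarrow> norm (f z) ^ 2 \<le> B * norm (bm_inner Q f f (Q z))"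
proof -
  obtain d B where d: "0 < d" "\<And>z. z \<in> torus \<Longrightarrow> d \<le> norm (deriv Q z) \<and> norm (deriv Q z) \<le> B"
    using circle_cover_deriv_bounds[OF Q] by metis
  obtain N where fin: "\<And>w. finite (circle_fibre Q w)"
    using circle_cover_fibre_bound[OF Q] by metis
  have "norm (f z) ^ 2 \<le> B * norm (bm_inner Q f f (Q z))" if z: "z \<in> torus" for f z
  proof -
    let ?S = "\<Sum>u\<in>circle_fibre Q (Q z). norm (f u) ^ 2 / norm (deriv Q u)"
    have zf: "z \<in> circle_fibre Q (Q z)" using z by (simp add: circle_fibre_def)
    have "\<forall>u\<in>circle_fibre Q (Q z). norm (deriv Q u) > 0"
      using d by (force simp: circle_fibre_def)
    then have S: "0 \<le> ?S" "norm (f z) ^ 2 / norm (deriv Q z) \<le> ?S"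
      using zf fin by (auto intro: sum_nonneg member_le_sum)
    have "norm (f z) ^ 2 = norm (deriv Q z) * (norm (f z) ^ 2 / norm (deriv Q z))"
      using d z by force
    also have "\<dots> \<le> B * ?S"
      using d(1) d(2)[OF z] S by (intro mult_mono) auto
    also have "\<dots> = B * norm (bm_inner Q f f (Q z))"
      unfolding bm_inner_self[OF circle_cover_torus[OF Q z]] norm_of_real using S(1) by simp
    finally show ?thesis .
  qed
  moreover have "B > 0" using d one_in_torus by force
  ultimately show ?thesis using that by blast
qed

lemma bm_inner_small_imp_small:
  assumes Q: "circle_cover Q" and "\<epsilon> > 0"
  obtains e where "e > 0"
    "\<And>f z. z \<in> torus \<Longrightarrow> (\<forall>w\<in>torus. norm (bm_inner Q f f w) \<le> e) \<Longrightarrow> norm (f z) < \<epsilon>"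
proof -
  obtain B where B: "B > 0" "\<And>f z. z \<in> torus \<Longrightarrow> norm (f z) ^ 2 \<le> B * norm (bm_inner Q f f (Q z))"
    using norm_sq_le_bm_inner[OF Q] by metis
  have "norm (f z) < \<epsilon>"
    if z: "z \<in> torus" and small: "\<forall>w\<in>torus. norm (bm_inner Q f f w) \<le> \<epsilon>\<^sup>2 / (2 * B)" for f z
  proof -
    have "norm (f z) ^ 2 \<le> B * (\<epsilon>\<^sup>2 / (2 * B))"
      using B small circle_cover_torus[OF Q z] z by (meson mult_left_mono less_imp_le order.trans)
    also have "\<dots> < \<epsilon>\<^sup>2" using B(1) \<open>\<epsilon> > 0\<close> by simp
    finally show ?thesis using \<open>\<epsilon> > 0\<close> by (simp add: power_less_imp_less_base)
  qed
  moreover have "\<epsilon>\<^sup>2 / (2 * B) > 0" using B(1) \<open>\<epsilon> > 0\<close> by simp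
  ultimately show ?thesis using that by blast
qed

lemma norm_bm_inner_le:
  assumes Q: "circle_cover Q"
  obtains K where "K > 0" "\<And>f g a b w. (\<And>u. u \<in> torus \<Longrightarrow> norm (f u) \<le> a) \<Longrightarrow>
      (\<And>u. u \<in> torus \<Longrightarrow> norm (g u) \<le> b) \<Longrightarrow> norm (bm_inner Q f g w) \<le> K * a * b"
proof -
  obtain d B where d: "0 < d" "\<And>z. z \<in> torus \<Longrightarrow> d \<le> norm (deriv Q z) \<and> norm (deriv Q z) \<le> B"
    using circle_cover_deriv_bounds[OF Q] by metis
  obtain N where N: "\<And>w. card (circle_fibre Q w) \<le> N"
    using circle_cover_fibre_bound[OF Q] by metis
  have "norm (bm_inner Q f g w) \<le> ((N + 1) / d) * a * b"
    if f: "\<And>u. u \<in> torus \<Longrightarrow> norm (f u) \<le> a" and g: "\<And>u. u \<in> torus \<Longrightarrow> norm (g u) \<le> b"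
    for f g a b w
  proof -
    have ab: "0 \<le> a" "0 \<le> b" using f g one_in_torus by (meson norm_ge_zero order.trans)+
    show ?thesis
    proof (cases "w \<in> torus")
      case False
      then show ?thesis using ab d(1) by (simp add: bm_inner_outside_torus)
    next
      case w: True
      have summand: "norm (cnj (f u) * g u / of_real (norm (deriv Q u))) \<le> a * b / d"
        if "u \<in> circle_fibre Q w" for u
      proof -
        have u: "u \<in> torus" using that by (simp add: circle_fibre_def)
        have "norm (f u) * norm (g u) \<le> a * b"
          using f[OF u] g[OF u] by (simp add: mult_mono')
        then show ?thesis
          using d u ab by (auto simp: norm_mult norm_divide intro!: frac_le)
      qed
      have "norm (bm_inner Q f g w) \<le> card (circle_fibre Q w) * (a * b / d)"
        unfolding bm_inner_torus[OF w] using sum_norm_le[OF summand] by simp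
      also have "\<dots> \<le> (N + 1) * (a * b / d)"
        using N[of w] ab d(1) by (intro mult_right_mono) auto
      finally show ?thesis by simp
    qed
  qed
  moreover have "(N + 1) / d > 0" using d(1) by simp
  ultimately show ?thesis using that by blast
qed

lemma bm_inner_uniform_limit:
  assumes Q: "circle_cover Q"
    and f: "uniform_limit torus f F sequentially" and g: "uniform_limit torus g G sequentially"
    and F: "bounded (F ` torus)" and G: "bounded (G ` torus)"
  shows "uniform_limit torus (\<lambda>n. bm_inner Q (f n) (g n)) (bm_inner Q F G) sequentially"
proof (rule uniform_limitI)
  fix e :: real assume "0 < e"
  obtain K where K: "K > 0" "\<And>f g a b w. (\<And>u. u \<in> torus \<Longrightarrow> norm (f u) \<le> a) \<Longrightarrow>
      (\<And>u. u \<in> torus \<Longrightarrow> norm (g u) \<le> b) \<Longrightarrow> norm (bm_inner Q f g w) \<le> K * a * b"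
    using norm_bm_inner_le[OF Q] by metis
  obtain A where A: "A > 0" "\<And>u. u \<in> torus \<Longrightarrow> norm (F u) \<le> A"
    using F by (auto simp: bounded_pos)
  obtain B where B: "B > 0" "\<And>u. u \<in> torus \<Longrightarrow> norm (G u) \<le> B"
    using G by (auto simp: bounded_pos)
  define C where "C = K * (A + B + 1)"
  have C: "C > 0" unfolding C_def using K(1) A(1) B(1) by simp
  define \<eta> where "\<eta> = min 1 (e / (2 * C))"
  have "K * \<eta> * (A + B + 1) = \<eta> * C" by (simp add: C_def)
  also have "\<dots> \<le> e / (2 * C) * C"
    using C by (intro mult_right_mono) (auto simp: \<eta>_def)
  also have "\<dots> < e" using C \<open>0 < e\<close> by simp
  finally have \<eta>: "0 < \<eta>" "\<eta> \<le> 1" "K * \<eta> * (A + B + 1) < e"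
    using C \<open>0 < e\<close> by (auto simp: \<eta>_def)
  have "\<forall>\<^sub>F n in sequentially. (\<forall>u\<in>torus. dist (f n u) (F u) < \<eta>) \<and> (\<forall>u\<in>torus. dist (g n u) (G u) < \<eta>)"
    using uniform_limitD[OF f \<eta>(1)] uniform_limitD[OF g \<eta>(1)] by (rule eventually_conj)
  then show "\<forall>\<^sub>F n in sequentially. \<forall>w\<in>torus. dist (bm_inner Q (f n) (g n) w) (bm_inner Q F G w) < e"
  proof (rule eventually_mono, intro ballI)
    fix n w
    assume close: "(\<forall>u\<in>torus. dist (f n u) (F u) < \<eta>) \<and> (\<forall>u\<in>torus. dist (g n u) (G u) < \<eta>)"
    have df: "norm (f n u - F u) \<le> \<eta>" and dg: "norm (g n u - G u) \<le> \<eta>" if "u \<in> torus" for u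
      using close that by (auto simp: dist_norm less_imp_le)
    have gn: "norm (g n u) \<le> B + 1" if "u \<in> torus" for u
      using norm_triangle_ineq[of "g n u - G u" "G u"] dg[OF that] B(2)[OF that] \<eta>(2) by simp
    have "dist (bm_inner Q (f n) (g n) w) (bm_inner Q F G w) \<le>
        norm (bm_inner Q (\<lambda>z. f n z - F z) (g n) w) + norm (bm_inner Q F (\<lambda>z. g n z - G z) w)"
      unfolding dist_norm bm_inner_diff by (rule norm_triangle_ineq)
    also have "\<dots> \<le> K * \<eta> * (B + 1) + K * A * \<eta>"
      using K(2)[of "\<lambda>z. f n z - F z" \<eta> "g n" "B + 1" w] K(2)[of F A "\<lambda>z. g n z - G z" \<eta> w]
        df dg gn A(2) by (intro add_mono) auto
    also have "\<dots> = K * \<eta> * (A + B + 1)" by (simp add: algebra_simps)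
    finally show "dist (bm_inner Q (f n) (g n) w) (bm_inner Q F G w) < e" using \<eta>(3) by simp
  qed
qed

definition tensor_eval :: "cfun \<Rightarrow> nat \<Rightarrow> etensor \<Rightarrow> cfun" where
  "tensor_eval R m x = (\<lambda>z. \<Prod>i<m. x i ((R ^^ i) z))"

definition tsum_eval :: "cfun \<Rightarrow> nat \<Rightarrow> etensor list \<Rightarrow> cfun" where
  "tsum_eval R m xs = (\<lambda>z. \<Sum>x\<leftarrow>xs. tensor_eval R m x z)"

lemma tensor_eval_Suc: "tensor_eval R (Suc m) x z = tensor_eval R m x z * x m ((R ^^ m) z)"
  by (simp add: tensor_eval_def)

lemma tin_eq_bm_inner:
  assumes R: "circle_cover R"
  shows "tin R k x y = bm_inner (R ^^ Suc k) (tensor_eval R (Suc k) x) (tensor_eval R (Suc k) y)"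
proof (induction k)
  case 0
  show ?case by (simp add: tensor_eval_def fun_eq_iff)
next
  case (Suc k)
  have "R ^^ Suc (Suc k) = R \<circ> R ^^ Suc k" by (rule funpow.simps(2))
  then show ?case
    using bm_inner_comp[OF R circle_cover_funpow[OF R, of "Suc k"], of "x (Suc k)"
        "tensor_eval R (Suc k) x" "tensor_eval R (Suc k) y" "y (Suc k)"]
    unfolding tin.simps Suc fun_eq_iff tensor_eval_Suc[of R "Suc k"]
    by simp
qed

lemma sinner_eq_bm_inner:
  assumes "circle_cover R" "m \<ge> 1"
  shows "sinner R m xs ys w = bm_inner (R ^^ m) (tsum_eval R m xs) (tsum_eval R m ys) w"
  using assms(2)
  by (simp add: sinner_def tsum_eval_def bm_inner_sum_list_left bm_inner_sum_list_right
      tin_eq_bm_inner[OF assms(1)])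

lemma tensor_eval_mult_update:
  assumes "i < m"
  shows "tensor_eval R m (x(i := (\<lambda>w. c w * x i w))) z = c ((R ^^ i) z) * tensor_eval R m x z"
proof -
  have split: "tensor_eval R m y z = y i ((R ^^ i) z) * (\<Prod>j\<in>{..<m} - {i}. y j ((R ^^ j) z))" for y
    unfolding tensor_eval_def using assms by (intro prod.remove) auto
  have "(\<Prod>j\<in>{..<m} - {i}. (x(i := h)) j ((R ^^ j) z)) = (\<Prod>j\<in>{..<m} - {i}. x j ((R ^^ j) z))"
    for h by (intro prod.cong) auto
  then show ?thesis unfolding split by simp
qed

lemma tsum_eval_mult_update:
  "i < m \<Longrightarrow>
    tsum_eval R m (map (\<lambda>x. x(i := (\<lambda>w. c w * x i w))) xs) z = c ((R ^^ i) z) * tsum_eval R m xs z"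
  by (simp add: tsum_eval_def tensor_eval_mult_update sum_list_const_mult comp_def)

lemma tsum_eval_append: "tsum_eval R m (xs @ ys) z = tsum_eval R m xs z + tsum_eval R m ys z"
  by (simp add: tsum_eval_def)

lemma tsum_eval_tscale: "m \<ge> 1 \<Longrightarrow> tsum_eval R m (tscale c xs) z = c * tsum_eval R m xs z"
  using tsum_eval_mult_update[of 0 m R "\<lambda>_. c" xs z] by (simp add: tscale_def)

lemma tsum_eval_tdiff:
  "m \<ge> 1 \<Longrightarrow> tsum_eval R m (tdiff xs ys) = (\<lambda>z. tsum_eval R m xs z - tsum_eval R m ys z)"
  by (simp add: tdiff_def tsum_eval_append tsum_eval_tscale fun_eq_iff)

lemma tsum_eval_tlact: "m \<ge> 1 \<Longrightarrow> tsum_eval R m (tlact a xs) z = a z * tsum_eval R m xs z"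
  using tsum_eval_mult_update[of 0 m R a xs z] by (simp add: tlact_def lact_def)

lemma tsum_eval_tract:
  assumes "m \<ge> 1"
  shows "tsum_eval R m (tract R m xs b) z = tsum_eval R m xs z * b ((R ^^ m) z)"
proof -
  obtain k where m: "m = Suc k" using assms by (cases m) auto
  have "tract R m xs b = map (\<lambda>x. x(k := (\<lambda>w. b (R w) * x k w))) xs"
    by (simp add: tract_def ract_def m mult.commute)
  then show ?thesis
    using tsum_eval_mult_update[of k m R "\<lambda>w. b (R w)" xs z] by (simp add: m mult.commute)
qed

lemma tensor_eval_continuous_on:
  assumes R: "circle_cover R" and x: "\<forall>i<m. x i \<in> CT"
  shows "continuous_on torus (tensor_eval R m x)"
  unfolding tensor_eval_def
proof (rule continuous_on_prod)
  fix i assume "i \<in> {..<m}"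
  then have "continuous_on torus (x i)" using x by (simp add: CT_def)
  moreover have Ri: "circle_cover (R ^^ i)" by (rule circle_cover_funpow[OF R])
  then have "continuous_on torus (R ^^ i)" by (rule circle_cover_continuous_on)
  moreover have "(R ^^ i) ` torus \<subseteq> torus" using circle_cover_torus[OF Ri] by blast
  ultimately show "continuous_on torus (\<lambda>z. x i ((R ^^ i) z))"
    by (rule continuous_on_compose2)
qed

lemma tsum_eval_continuous_on:
  assumes R: "circle_cover R" and xs: "xs \<in> tsums m"
  shows "continuous_on torus (tsum_eval R m xs)"
  using xs
proof (induction xs)
  case Nil
  then show ?case by (simp add: tsum_eval_def)
next
  case (Cons x xs)
  have "tsum_eval R m (x # xs) = (\<lambda>z. tensor_eval R m x z + tsum_eval R m xs z)"
    by (simp add: tsum_eval_def fun_eq_iff)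
  then show ?case
    using Cons tensor_eval_continuous_on[OF R, of m x]
    by (simp add: tsums_def continuous_on_add)
qed

lemma tsum_eval_outside_torus:
  assumes "xs \<in> tsums m" "m \<ge> 1" "z \<notin> torus"
  shows "tsum_eval R m xs z = 0"
proof -
  have "tensor_eval R m x z = 0" if "x \<in> set xs" for x
  proof -
    have "x 0 z = 0" using assms that by (auto simp: tsums_def CT_def)
    then show ?thesis unfolding tensor_eval_def using assms(2)
      by (intro prod_zero bexI[of _ 0]) auto
  qed
  then have "map (\<lambda>x. tensor_eval R m x z) xs = map (\<lambda>_. 0) xs" by (intro map_cong) auto
  then show ?thesis unfolding tsum_eval_def by (metis sum_list_0)
qed

definition Psi :: "cfun \<Rightarrow> nat \<Rightarrow> (nat \<Rightarrow> etensor list) \<Rightarrow> cfun" where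
  "Psi R m s = (\<lambda>z. if z \<in> torus then lim (\<lambda>n. tsum_eval R m (s n) z) else 0)"

lemma Psi_eqI:
  assumes "\<And>z. z \<in> torus \<Longrightarrow> (\<lambda>n. tsum_eval R m (s n) z) \<longlonglongrightarrow> f z"
    and "\<And>z. z \<notin> torus \<Longrightarrow> f z = 0"
  shows "Psi R m s = f"
  using assms by (auto simp: Psi_def fun_eq_iff limI)

lemma Psi_outside_torus [simp]: "z \<notin> torus \<Longrightarrow> Psi R m s z = 0"
  by (simp add: Psi_def)

lemma uniform_limit_sequentially_le:
  assumes "uniform_limit S f l sequentially" "e > 0"
  shows "\<exists>N. \<forall>n\<ge>N. \<forall>x\<in>S. dist (f n x) (l x) \<le> e"
  using uniform_limitD[OF assms] unfolding eventually_sequentially by (meson less_imp_le)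

lemma CT_bounded: "f \<in> CT \<Longrightarrow> bounded (f ` torus)"
  by (intro compact_imp_bounded compact_continuous_image) (auto simp: CT_def torus_def)

context
  fixes R :: cfun and m :: nat
  assumes R: "circle_cover R" and m: "m \<ge> 1"
begin

lemma tsmall_tdiff_iff:
  "tsmall R m (tdiff xs ys) e \<longleftrightarrow> (\<forall>w\<in>torus. norm (bm_inner (R ^^ m)
      (\<lambda>z. tsum_eval R m xs z - tsum_eval R m ys z) (\<lambda>z. tsum_eval R m xs z - tsum_eval R m ys z) w) \<le> e)"
  by (simp add: tsmall_def sinner_eq_bm_inner[OF R m] tsum_eval_tdiff[OF m])

lemma tsmall_tdiff_imp_close:
  assumes "\<epsilon> > 0"
  obtains e where "e > 0" "\<And>xs ys z. z \<in> torus \<Longrightarrow> tsmall R m (tdiff xs ys) e \<Longrightarrow>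
      norm (tsum_eval R m xs z - tsum_eval R m ys z) < \<epsilon>"
proof -
  obtain e where "e > 0" "\<And>f z. z \<in> torus \<Longrightarrow> (\<forall>w\<in>torus. norm (bm_inner (R ^^ m) f f w) \<le> e) \<Longrightarrow>
      norm (f z) < \<epsilon>"
    using bm_inner_small_imp_small[OF circle_cover_funpow[OF R] assms] by metis
  then show ?thesis using that unfolding tsmall_tdiff_iff by blast
qed

lemma uniform_limit_Psi:
  assumes s: "tcauchy R m s"
  shows "uniform_limit torus (\<lambda>n. tsum_eval R m (s n)) (Psi R m s) sequentially"
proof -
  have "uniformly_Cauchy_on torus (\<lambda>n. tsum_eval R m (s n))"
    unfolding uniformly_Cauchy_on_def dist_norm
  proof (intro allI impI)
    fix \<epsilon> :: real assume "\<epsilon> > 0"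
    then obtain e where e: "e > 0" "\<And>xs ys z. z \<in> torus \<Longrightarrow> tsmall R m (tdiff xs ys) e \<Longrightarrow>
        norm (tsum_eval R m xs z - tsum_eval R m ys z) < \<epsilon>"
      using tsmall_tdiff_imp_close by metis
    then obtain N where "\<forall>n\<ge>N. \<forall>k\<ge>N. tsmall R m (tdiff (s n) (s k)) e"
      using s unfolding tcauchy_def by blast
    then show "\<exists>N. \<forall>z\<in>torus. \<forall>n\<ge>N. \<forall>k\<ge>N. norm (tsum_eval R m (s n) z - tsum_eval R m (s k) z) < \<epsilon>"
      using e(2) by blast
  qed
  then obtain l where l: "uniform_limit torus (\<lambda>n. tsum_eval R m (s n)) l sequentially"
    using Cauchy_uniformly_convergent unfolding uniformly_convergent_on_def by blast
  moreover have "l z = Psi R m s z" if "z \<in> torus" for z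
    using tendsto_uniform_limitI[OF l that] that by (simp add: Psi_def limI)
  ultimately show ?thesis
    by (subst uniform_limit_cong'[where h = "Psi R m s" and i = l]) auto
qed

lemma tendsto_Psi:
  "tcauchy R m s \<Longrightarrow> z \<in> torus \<Longrightarrow> (\<lambda>n. tsum_eval R m (s n) z) \<longlonglongrightarrow> Psi R m s z"
  by (rule tendsto_uniform_limitI[OF uniform_limit_Psi])

lemma Psi_in_CT:
  assumes s: "tcauchy R m s"
  shows "Psi R m s \<in> CT"
proof -
  have "\<forall>\<^sub>F n in sequentially. continuous_on torus (tsum_eval R m (s n))"
    using s tsum_eval_continuous_on[OF R] by (simp add: tcauchy_def)
  then have "continuous_on torus (Psi R m s)"
    using uniform_limit_Psi[OF s] by (rule uniform_limit_theorem) simp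
  then show ?thesis by (simp add: CT_def Psi_def)
qed

lemma Psi_eq_iff_tequiv:
  assumes s: "tcauchy R m s" and t: "tcauchy R m t"
  shows "Psi R m s = Psi R m t \<longleftrightarrow> tequiv R m s t"
proof
  assume eq: "Psi R m s = Psi R m t"
  let ?D = "\<lambda>n z. tsum_eval R m (s n) z - tsum_eval R m (t n) z"
  have "uniform_limit torus ?D (\<lambda>_. 0) sequentially"
    using uniform_limit_minus[OF uniform_limit_Psi[OF s] uniform_limit_Psi[OF t]] by (simp add: eq)
  then have "uniform_limit torus (\<lambda>n. bm_inner (R ^^ m) (?D n) (?D n)) (bm_inner (R ^^ m) (\<lambda>_. 0) (\<lambda>_. 0))
      sequentially"
    by (intro bm_inner_uniform_limit circle_cover_funpow[OF R]) (auto intro: bounded_subset[of "{0}"])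
  then have "uniform_limit torus (\<lambda>n. bm_inner (R ^^ m) (?D n) (?D n)) (\<lambda>_. 0) sequentially"
    by simp
  from uniform_limit_sequentially_le[OF this] show "tequiv R m s t"
    unfolding tequiv_def tsmall_tdiff_iff by (simp add: dist_norm)
next
  assume eq: "tequiv R m s t"
  have "(\<lambda>n. tsum_eval R m (s n) z - tsum_eval R m (t n) z) \<longlonglongrightarrow> 0" if z: "z \<in> torus" for z
  proof (rule LIMSEQ_I)
    fix \<epsilon> :: real assume "\<epsilon> > 0"
    then obtain e where e: "e > 0" "\<And>xs ys. tsmall R m (tdiff xs ys) e \<Longrightarrow>
        norm (tsum_eval R m xs z - tsum_eval R m ys z) < \<epsilon>"
      using tsmall_tdiff_imp_close z by metis
    then show "\<exists>N. \<forall>n\<ge>N. norm (tsum_eval R m (s n) z - tsum_eval R m (t n) z - 0) < \<epsilon>"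
      using eq unfolding tequiv_def by fastforce
  qed
  moreover have "(\<lambda>n. tsum_eval R m (s n) z - tsum_eval R m (t n) z) \<longlonglongrightarrow> Psi R m s z - Psi R m t z"
    if "z \<in> torus" for z
    using that by (intro tendsto_diff tendsto_Psi s t)
  ultimately have "Psi R m s z = Psi R m t z" for z
    using LIMSEQ_unique by (fastforce simp: Psi_def)
  then show "Psi R m s = Psi R m t" by blast
qed

lemma Psi_append:
  "tcauchy R m s \<Longrightarrow> tcauchy R m t \<Longrightarrow> Psi R m (\<lambda>n. s n @ t n) = (\<lambda>z. Psi R m s z + Psi R m t z)"
  by (rule Psi_eqI) (auto simp: tsum_eval_append intro: tendsto_add tendsto_Psi)

lemma Psi_tscale: "tcauchy R m s \<Longrightarrow> Psi R m (\<lambda>n. tscale c (s n)) = (\<lambda>z. c * Psi R m s z)"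
  by (rule Psi_eqI) (auto simp: tsum_eval_tscale[OF m] intro: tendsto_mult_left tendsto_Psi)

lemma Psi_tlact: "tcauchy R m s \<Longrightarrow> Psi R m (\<lambda>n. tlact a (s n)) = lact a (Psi R m s)"
  unfolding lact_def
  by (rule Psi_eqI) (auto simp: tsum_eval_tlact[OF m] intro: tendsto_mult_left tendsto_Psi)

lemma Psi_tract:
  "tcauchy R m s \<Longrightarrow> Psi R m (\<lambda>n. tract R m (s n) b) = ract (R ^^ m) (Psi R m s) b"
  unfolding ract_def
  by (rule Psi_eqI) (auto simp: tsum_eval_tract[OF m] intro: tendsto_mult_right tendsto_Psi)

lemma sinner_uniform_limit:
  assumes s: "tcauchy R m s" and t: "tcauchy R m t"
  shows "uniform_limit torus (\<lambda>n. sinner R m (s n) (t n)) (bm_inner (R ^^ m) (Psi R m s) (Psi R m t))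
    sequentially"
  unfolding sinner_eq_bm_inner[OF R m, abs_def]
  by (intro bm_inner_uniform_limit circle_cover_funpow[OF R] uniform_limit_Psi s t CT_bounded Psi_in_CT)

lemma Psi_const:
  assumes xs: "xs \<in> tsums m"
  shows "tcauchy R m (\<lambda>n. xs)" "Psi R m (\<lambda>n. xs) = tsum_eval R m xs"
proof -
  show "tcauchy R m (\<lambda>n. xs)"
    using xs by (auto simp: tcauchy_def tsmall_tdiff_iff bm_inner_def)
  show "Psi R m (\<lambda>n. xs) = tsum_eval R m xs"
    using tsum_eval_outside_torus[OF xs m] by (intro Psi_eqI) auto
qed

text \<open>Every \<open>f \<in> C(\<bbbT>)\<close> is the image of the elementary tensor \<open>f \<otimes> 1 \<otimes> \<dots> \<otimes> 1\<close>.\<close>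

lemma Psi_surj:
  assumes f: "f \<in> CT"
  obtains s where "tcauchy R m s" "Psi R m s = f"
proof -
  define one :: cfun where "one z = (if z \<in> torus then 1 else 0)" for z
  have "one \<in> CT"
    unfolding CT_def one_def by (auto intro: continuous_on_eq[OF continuous_on_const])
  define x :: etensor where "x i = (if i = 0 then f else one)" for i
  have xs: "[x] \<in> tsums m" using f \<open>one \<in> CT\<close> by (simp add: tsums_def x_def)
  obtain k where k: "m = Suc k" using m by (cases m) auto
  have "tensor_eval R m x z = f z" for z
  proof (cases "z \<in> torus")
    case True
    then have "(R ^^ Suc i) z \<in> torus" for i
      by (rule circle_cover_torus[OF circle_cover_funpow[OF R]])
    then show ?thesis
      unfolding tensor_eval_def k prod.lessThan_Suc_shift by (simp add: x_def one_def del: funpow.simps)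
  next
    case False
    then show ?thesis
      using f unfolding tensor_eval_def k prod.lessThan_Suc_shift by (simp add: x_def CT_def)
  qed
  then have "Psi R m (\<lambda>n. [x]) = f"
    using Psi_const(2)[OF xs] by (simp add: tsum_eval_def fun_eq_iff)
  then show ?thesis using that Psi_const(1)[OF xs] by blast
qed

end

theorem proposition4p5:
  fixes R :: "complex \<Rightarrow> complex" and m :: nat
  assumes "fin_blaschke R" and "m \<ge> 1"
  shows "\<exists>\<Psi>. hbm_iso R m (R ^^ m) \<Psi> \<and>
    (\<forall>x. (\<forall>i<m. x i \<in> CT) \<longrightarrow> \<Psi> (\<lambda>n. [x]) = (\<lambda>z. \<Prod>i<m. x i ((R ^^ i) z)))"
proof (intro exI conjI allI impI)
  have R: "circle_cover R" using assms(1) by (rule blaschke_circle_cover)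
  note m = assms(2)
  show "hbm_iso R m (R ^^ m) (Psi R m)"
    unfolding hbm_iso_def
    using Psi_in_CT[OF R m] Psi_eq_iff_tequiv[OF R m] Psi_surj[OF R m] Psi_append[OF R m]
      Psi_tscale[OF R m] Psi_tlact[OF R m] Psi_tract[OF R m]
      uniform_limit_sequentially_le[OF sinner_uniform_limit[OF R m]]
    by (simp add: dist_norm) metis
  fix x :: etensor
  assume "\<forall>i<m. x i \<in> CT"
  then have "[x] \<in> tsums m" by (simp add: tsums_def)
  then show "Psi R m (\<lambda>n. [x]) = (\<lambda>z. \<Prod>i<m. x i ((R ^^ i) z))"
    using Psi_const(2)[OF R m] by (simp add: tsum_eval_def tensor_eval_def)
qed

end
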